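(* There is an absolute constant $c_0>0$ such that for all $0<\mu<c_0$ there is $n_0$ such that for all even $n\ge n_0$ the following holds. Let $D\subseteq[n-1]$ with $|D|=\mu n+1$ and let $\mathbf{G}$ be chosen uniformly at random from $\mathcal{G}^{\mathrm{col}}_D$. Then $\mathbb{P}[\mathbf{G}\text{ is quasirandom}]\ge 1-\exp(-\mu^3n^2)$.
   Context: Fix a vertex set $V$ with $|V|=n$, $n$ even. For $D\subseteq[n-1]$, $\mathcal{G}^{\mathrm{col}}_D$ is the set of pairs $(G,\phi_G)$ where $G$ is a $|D|$-regular graph on $V$ and $\phi_G$ is a 1-factorization of $G$ with colour set $D$. For (not necessarily distinct or disjoint) $A,B\subseteq V$, $e_G(A,B)$ is the number of edges $ab\in E(G)$ with $a\in A$, $b\in B$. $G\in\mathcal{G}^{\mathrm{col}}_D$ is quasirandom if for all $A,B\subseteq V$ with $|A|=|B|=|D|$ we have $e_G(A,B)<8(|D|-1)^3/n$. *)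

theory Defs
  imports Complex_Main
begin

definition all_edges :: "nat \<Rightarrow> nat set set" where
  "all_edges n = {e. e \<subseteq> {..<n} \<and> card e = 2}"

definition degree :: "nat set set \<Rightarrow> nat \<Rightarrow> nat" where
  "degree G v = card {e \<in> G. v \<in> e}"

definition perfect_matching :: "nat \<Rightarrow> nat set set \<Rightarrow> bool" where
  "perfect_matching n M \<longleftrightarrow> M \<subseteq> all_edges n \<and> (\<forall>v \<in> {..<n}. \<exists>!e. e \<in> M \<and> v \<in> e)"

text \<open>Coloured graphs: pairs (G, phi) with G a |D|-regular graph on V and phi a
  1-factorization of G with colour set D (each colour class is a perfect matching of V).
  phi is taken extensional: phi e = 0 for non-edges (0 is not a colour since D is in [n-1]).\<close>

definition col_graphs :: "nat \<Rightarrow> nat set \<Rightarrow> (nat set set \<times> (nat set \<Rightarrow> nat)) set" where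
  "col_graphs n D = {(G, \<phi>). G \<subseteq> all_edges n
      \<and> (\<forall>v \<in> {..<n}. degree G v = card D)
      \<and> (\<forall>e \<in> G. \<phi> e \<in> D)
      \<and> (\<forall>e. e \<notin> G \<longrightarrow> \<phi> e = 0)
      \<and> (\<forall>d \<in> D. perfect_matching n {e \<in> G. \<phi> e = d})}"

definition e_G :: "nat set set \<Rightarrow> nat set \<Rightarrow> nat set \<Rightarrow> nat" where
  "e_G G A B = card {(a, b). a \<in> A \<and> b \<in> B \<and> {a, b} \<in> G}"

definition quasirandom :: "nat \<Rightarrow> nat set \<Rightarrow> nat set set \<Rightarrow> bool" where
  "quasirandom n D G \<longleftrightarrow>
     (\<forall>A B. A \<subseteq> {..<n} \<and> B \<subseteq> {..<n} \<and> card A = card D \<and> card B = card D \<longrightarrow>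
        real (e_G G A B) < 8 * (real (card D) - 1) ^ 3 / real n)"

definition prob_quasirandom :: "nat \<Rightarrow> nat set \<Rightarrow> real" where
  "prob_quasirandom n D =
     real (card {x \<in> col_graphs n D. quasirandom n D (fst x)}) / real (card (col_graphs n D))"

end

theory Submission
  imports Defs "HOL-Analysis.Harmonic_Numbers"
begin

(* Fix A and B with |A| = |B| = d = |D|. A switching of a coloured graph picks an edge ab with
   a in A, b in B, and an edge xy of the same colour with x, y outside A and B, and replaces ab, xy
   by ax, by in that colour; this lowers e_G(A,B) by one or two. A graph with e_G(A,B) = k admits
   at least k(n - 6d) switchings, while the result of a switching together with a, b and the colour
   of ab determines it, since x and y are then the partners of a and b in that colour class. Hence
   the number M_k of coloured graphs with e_G(A,B) = k satisfies
   k(n - 6d) M_k <= d^3 (M_(k-1) + M_(k-2)), so M_k halves at every step beyond k ~ 6d^3/n. Summing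
   this geometric tail and taking a union bound over the at most 4^n pairs (A, B) gives the
   theorem. *)

section \<open>Edges and perfect matchings\<close>

lemma doubleton_in_all_edges_iff:
  "{u, v} \<in> all_edges n \<longleftrightarrow> u \<noteq> v \<and> u < n \<and> v < n"
  unfolding all_edges_def by (cases "u = v") auto

lemma all_edges_incidentE:
  assumes "e \<in> all_edges n" "v \<in> e"
  obtains w where "e = {v, w}" "w \<noteq> v" "w < n"
proof -
  obtain p q where pq: "e = {p, q}" "p \<noteq> q" and "e \<subseteq> {..<n}"
    using assms(1) unfolding all_edges_def by (auto simp: card_2_iff)
  then have "e = {v, if v = p then q else p}" "(if v = p then q else p) \<noteq> v" "(if v = p then q else p) < n"
    using assms(2) by auto
  then show ?thesis by (rule that)
qed

lemma finite_all_edges: "finite (all_edges n)"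
  unfolding all_edges_def by (rule finite_subset[of _ "Pow {..<n}"]) auto

lemma card_neighbours:
  assumes "G \<subseteq> all_edges n"
  shows "card {w. {v, w} \<in> G} = degree G v"
proof -
  have "inj_on (\<lambda>w. {v, w}) {w. {v, w} \<in> G}"
  proof (rule inj_onI)
    fix w w' assume "w \<in> {w. {v, w} \<in> G}" and eq: "{v, w} = {v, w'}"
    have "{v, w} \<in> all_edges n"
      using assms \<open>w \<in> {w. {v, w} \<in> G}\<close> by blast
    then have "w \<noteq> v" unfolding doubleton_in_all_edges_iff by simp
    with eq show "w = w'" by (auto simp: doubleton_eq_iff)
  qed
  moreover have "(\<lambda>w. {v, w}) ` {w. {v, w} \<in> G} = {e \<in> G. v \<in> e}"
  proof
    show "{e \<in> G. v \<in> e} \<subseteq> (\<lambda>w. {v, w}) ` {w. {v, w} \<in> G}"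
    proof
      fix e assume e: "e \<in> {e \<in> G. v \<in> e}"
      then have "e \<in> all_edges n" "v \<in> e" using assms by auto
      then obtain w where "e = {v, w}" by (rule all_edges_incidentE)
      then show "e \<in> (\<lambda>w. {v, w}) ` {w. {v, w} \<in> G}" using e by blast
    qed
  qed blast
  ultimately show ?thesis
    unfolding degree_def using card_image by fastforce
qed

lemma perfect_matching_iff_card:
  assumes "M \<subseteq> all_edges n"
  shows "perfect_matching n M \<longleftrightarrow> (\<forall>v<n. card {e \<in> M. v \<in> e} = 1)"
proof -
  have "(\<exists>!e. e \<in> M \<and> v \<in> e) \<longleftrightarrow> card {e \<in> M. v \<in> e} = 1" for v
  proof
    assume "\<exists>!e. e \<in> M \<and> v \<in> e"
    then obtain e where "{e \<in> M. v \<in> e} = {e}" by auto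
    then show "card {e \<in> M. v \<in> e} = 1" by simp
  next
    assume "card {e \<in> M. v \<in> e} = 1"
    then obtain e where "{e \<in> M. v \<in> e} = {e}" by (auto simp: card_Suc_eq)
    then show "\<exists>!e. e \<in> M \<and> v \<in> e" by (metis (mono_tags, lifting) mem_Collect_eq singletonD singletonI)
  qed
  then show ?thesis
    using assms unfolding perfect_matching_def by auto
qed

lemma perfect_matching_unique:
  "perfect_matching n M \<Longrightarrow> v < n \<Longrightarrow> e \<in> M \<Longrightarrow> v \<in> e \<Longrightarrow> e' \<in> M \<Longrightarrow> v \<in> e' \<Longrightarrow> e = e'"
  unfolding perfect_matching_def by blast

definition partner :: "nat set set \<Rightarrow> nat \<Rightarrow> nat" where
  "partner M v = (THE w. {v, w} \<in> M)"

lemma perfect_matching_ex1_partner: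
  assumes "perfect_matching n M" "v < n"
  shows "\<exists>!w. {v, w} \<in> M"
proof -
  obtain e where e: "e \<in> M" "v \<in> e" and uniq: "\<And>e'. e' \<in> M \<Longrightarrow> v \<in> e' \<Longrightarrow> e' = e"
    using assms unfolding perfect_matching_def by blast
  have "e \<in> all_edges n" using e(1) assms(1) unfolding perfect_matching_def by blast
  then obtain w where w: "e = {v, w}" "w \<noteq> v" using e(2) by (rule all_edges_incidentE)
  have "w' = w" if "{v, w'} \<in> M" for w'
  proof -
    have "{v, w'} = {v, w}" using uniq[OF that] w(1) by simp
    then show ?thesis using w(2) by (auto simp: doubleton_eq_iff)
  qed
  then show ?thesis using e(1) w(1) by blast
qed

lemma partner_in:
  "perfect_matching n M \<Longrightarrow> v < n \<Longrightarrow> {v, partner M v} \<in> M"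
  unfolding partner_def by (rule theI') (rule perfect_matching_ex1_partner)

lemma partner_eq:
  assumes "perfect_matching n M" "{v, w} \<in> M"
  shows "partner M v = w"
proof -
  have "{v, w} \<in> all_edges n" using assms unfolding perfect_matching_def by blast
  then have "v < n" unfolding doubleton_in_all_edges_iff by simp
  then show ?thesis
    unfolding partner_def by (rule the1_equality[OF perfect_matching_ex1_partner[OF assms(1)] assms(2)])
qed

lemma inj_on_partner:
  assumes "perfect_matching n M"
  shows "inj_on (partner M) {..<n}"
proof (rule inj_onI)
  fix v v' assume "v \<in> {..<n}" "v' \<in> {..<n}" and eq: "partner M v = partner M v'"
  have "{partner M v, v} \<in> M" "{partner M v', v'} \<in> M"
    using partner_in[OF assms, of v] partner_in[OF assms, of v'] \<open>v \<in> {..<n}\<close> \<open>v' \<in> {..<n}\<close>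
    by (simp_all add: insert_commute)
  then have "{partner M v, v} \<in> M" "{partner M v, v'} \<in> M" using eq by simp_all
  then show "v = v'" using partner_eq[OF assms] by metis
qed

lemma card_partner_preimage_le:
  assumes "perfect_matching n M" "finite T"
  shows "card {v \<in> {..<n}. partner M v \<in> T} \<le> card T"
  by (rule card_inj_on_le[of "partner M", OF _ _ assms(2)])
     (auto intro: inj_on_subset[OF inj_on_partner[OF assms(1)]])

section \<open>Coloured graphs\<close>

lemma col_graphsD:
  assumes "(G, \<phi>) \<in> col_graphs n D"
  shows "G \<subseteq> all_edges n" "\<And>v. v < n \<Longrightarrow> degree G v = card D"
    "\<And>e. e \<in> G \<Longrightarrow> \<phi> e \<in> D" "\<And>e. e \<notin> G \<Longrightarrow> \<phi> e = 0"
    "\<And>d. d \<in> D \<Longrightarrow> perfect_matching n {e \<in> G. \<phi> e = d}"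
  using assms unfolding col_graphs_def by auto

lemma finite_col_graphs:
  assumes "finite D"
  shows "finite (col_graphs n D)"
proof (rule finite_subset)
  let ?colourings = "{\<phi>. \<forall>e. (e \<in> all_edges n \<longrightarrow> \<phi> e \<in> insert 0 D) \<and> (e \<notin> all_edges n \<longrightarrow> \<phi> e = 0)}"
  show "col_graphs n D \<subseteq> Pow (all_edges n) \<times> ?colourings"
  proof
    fix X assume "X \<in> col_graphs n D"
    moreover obtain G \<phi> where G: "X = (G, \<phi>)" by fastforce
    ultimately have X: "(G, \<phi>) \<in> col_graphs n D" by simp
    have "\<phi> e \<in> insert 0 D" for e
      using col_graphsD(3,4)[OF X] by (cases "e \<in> G") auto
    then show "X \<in> Pow (all_edges n) \<times> ?colourings"
      using col_graphsD(1,4)[OF X] G by auto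
  qed
  show "finite (Pow (all_edges n) \<times> ?colourings)"
    using finite_all_edges assms by (intro finite_cartesian_product finite_set_of_finite_funs) auto
qed

lemma degree_eq_card_colours:
  assumes colours: "\<And>e. e \<in> G \<Longrightarrow> \<phi> e \<in> D"
    and matchings: "\<And>d. d \<in> D \<Longrightarrow> perfect_matching n {e \<in> G. \<phi> e = d}" and "v < n"
  shows "degree G v = card D"
proof -
  have "bij_betw \<phi> {e \<in> G. v \<in> e} D"
  proof (rule bij_betwI')
    fix e e' assume e: "e \<in> {e \<in> G. v \<in> e}" and e': "e' \<in> {e \<in> G. v \<in> e}"
    show "\<phi> e = \<phi> e' \<longleftrightarrow> e = e'"
    proof
      assume "\<phi> e = \<phi> e'"
      moreover have "perfect_matching n {f \<in> G. \<phi> f = \<phi> e}" using matchings colours e by blast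
      ultimately show "e = e'"
        using perfect_matching_unique e e' \<open>v < n\<close> by (metis (mono_tags, lifting) mem_Collect_eq)
    qed simp
  next
    fix d assume "d \<in> D"
    then have "{v, partner {e \<in> G. \<phi> e = d} v} \<in> {e \<in> G. \<phi> e = d}"
      using partner_in[OF matchings \<open>v < n\<close>] by blast
    then show "\<exists>e \<in> {e \<in> G. v \<in> e}. d = \<phi> e" by auto
  qed (use colours in blast)
  then show ?thesis unfolding degree_def by (rule bij_betw_same_card)
qed

lemma add_mod_left_cancel_less:
  fixes x j j' :: nat
  assumes "(x + j) mod h = (x + j') mod h" "j < h" "j' < h"
  shows "j = j'"
proof -
  have "h dvd (x + max j j') - (x + min j j')"
    using assms(1) mod_eq_dvd_iff_nat[of "x + min j j'" "x + max j j'" h]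
    by (cases "j \<le> j'") (simp_all add: max_def min_def)
  then have "h dvd max j j' - min j j'" by simp
  moreover have "max j j' - min j j' < h" using assms(2,3) by linarith
  ultimately show ?thesis using nat_dvd_not_less by fastforce
qed

definition cyclic_edge :: "nat \<Rightarrow> nat \<Rightarrow> nat \<Rightarrow> nat set" where
  "cyclic_edge h j x = {x, h + (x + j) mod h}"

lemma cyclic_edge_in_all_edges:
  "x < h \<Longrightarrow> cyclic_edge h j x \<in> all_edges (2 * h)"
  unfolding cyclic_edge_def doubleton_in_all_edges_iff by simp

lemma cyclic_edge_eq_iff:
  assumes "x < h" "x' < h" "j < h" "j' < h"
  shows "cyclic_edge h j x = cyclic_edge h j' x' \<longleftrightarrow> x = x' \<and> j = j'"
proof
  assume "cyclic_edge h j x = cyclic_edge h j' x'"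
  then have "x = x'" "(x + j) mod h = (x + j') mod h"
    using assms(1,2) unfolding cyclic_edge_def doubleton_eq_iff by auto
  then show "x = x' \<and> j = j'" using add_mod_left_cancel_less assms(3,4) by blast
qed simp

lemma perfect_matching_cyclic:
  assumes "j < h"
  shows "perfect_matching (2 * h) (cyclic_edge h j ` {..<h})"
  unfolding perfect_matching_def
proof (intro conjI ballI)
  show "cyclic_edge h j ` {..<h} \<subseteq> all_edges (2 * h)"
    using cyclic_edge_in_all_edges by blast
  fix v assume "v \<in> {..<2 * h}"
  obtain x where x: "x < h" "v = x \<or> v = h + (x + j) mod h"
  proof (cases "v < h")
    case False
    let ?x = "(v - h + (h - j)) mod h"
    have "(?x + j) mod h = (v - h + (h - j) + j) mod h" by (simp add: mod_add_left_eq)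
    also have "\<dots> = v - h" using False \<open>v \<in> {..<2 * h}\<close> assms by (simp add: le_mod_geq)
    finally show ?thesis using that[of ?x] False assms by simp
  qed auto
  have uniq: "x' = x" if "x' < h" "v = x' \<or> v = h + (x' + j) mod h" for x'
  proof (cases "v < h")
    case False
    then have "(j + x') mod h = (j + x) mod h" using x that by (simp add: add.commute)
    then show ?thesis using add_mod_left_cancel_less x(1) that(1) by blast
  qed (use x that in auto)
  then show "\<exists>!e. e \<in> cyclic_edge h j ` {..<h} \<and> v \<in> e"
  proof (intro ex1I[of _ "cyclic_edge h j x"] conjI)
    show "cyclic_edge h j x \<in> cyclic_edge h j ` {..<h}" "v \<in> cyclic_edge h j x"
      using x unfolding cyclic_edge_def by auto
  next
    fix e assume "e \<in> cyclic_edge h j ` {..<h} \<and> v \<in> e"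
    then obtain x' where "x' < h" "e = cyclic_edge h j x'" "v \<in> cyclic_edge h j x'" by blast
    moreover from this have "v = x' \<or> v = h + (x' + j) mod h" unfolding cyclic_edge_def by blast
    ultimately show "e = cyclic_edge h j x" using uniq by blast
  qed
qed

lemma col_graphs_nonempty:
  assumes "even n" "finite D" "2 * card D \<le> n"
  shows "col_graphs n D \<noteq> {}"
proof -
  obtain h where n: "n = 2 * h" using assms(1) by blast
  obtain g where g: "g ` D \<subseteq> {..<h}" "inj_on g D"
    using card_le_inj[OF assms(2), of "{..<h}"] assms(3) n by auto
  define M where "M c = cyclic_edge h (g c) ` {..<h}" for c
  define G where "G = (\<Union>c\<in>D. M c)"
  define \<phi> where "\<phi> e = (if e \<in> G then THE c. c \<in> D \<and> e \<in> M c else 0)" for e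
  have M_disjoint: "c' = c" if cc': "c \<in> D" "c' \<in> D" and "e \<in> M c" "e \<in> M c'" for c c' e
  proof -
    obtain x x' where "x < h" "x' < h" "cyclic_edge h (g c) x = cyclic_edge h (g c') x'"
      using \<open>e \<in> M c\<close> \<open>e \<in> M c'\<close> unfolding M_def by auto
    then have "g c' = g c" using cyclic_edge_eq_iff g(1) cc' by blast
    then show ?thesis using g(2) cc' by (simp add: inj_on_eq_iff)
  qed
  have \<phi>_M: "\<phi> e = c" if "c \<in> D" "e \<in> M c" for c e
  proof -
    have "(THE c. c \<in> D \<and> e \<in> M c) = c"
      using that M_disjoint by blast
    then show ?thesis using that unfolding \<phi>_def G_def by auto
  qed
  have colour_class: "{e \<in> G. \<phi> e = c} = M c" if "c \<in> D" for c
    using that \<phi>_M unfolding G_def by auto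
  have matchings: "perfect_matching n {e \<in> G. \<phi> e = c}" if "c \<in> D" for c
    unfolding colour_class[OF that] M_def n using g(1) that by (intro perfect_matching_cyclic) auto
  have colours: "\<phi> e \<in> D" if "e \<in> G" for e
    using that \<phi>_M unfolding G_def by auto
  have "G \<subseteq> all_edges n"
    unfolding G_def M_def n using cyclic_edge_in_all_edges by blast
  moreover have "\<phi> e = 0" if "e \<notin> G" for e
    using that unfolding \<phi>_def by simp
  ultimately have "(G, \<phi>) \<in> col_graphs n D"
    unfolding col_graphs_def using colours matchings degree_eq_card_colours[OF colours matchings]
    by auto
  then show ?thesis by blast
qed

section \<open>Switchings\<close>

definition switch_graph :: "'a set set \<Rightarrow> 'a \<Rightarrow> 'a \<Rightarrow> 'a \<Rightarrow> 'a \<Rightarrow> 'a set set" where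
  "switch_graph G a b x y = insert {a, x} (insert {b, y} (G - {{a, b}, {x, y}}))"

definition switch_colouring :: "('a set \<Rightarrow> nat) \<Rightarrow> 'a \<Rightarrow> 'a \<Rightarrow> 'a \<Rightarrow> 'a \<Rightarrow> 'a set \<Rightarrow> nat" where
  "switch_colouring \<phi> a b x y = \<phi>({a, b} := 0, {x, y} := 0, {a, x} := \<phi> {a, b}, {b, y} := \<phi> {a, b})"

definition switchable :: "nat set set \<Rightarrow> (nat set \<Rightarrow> nat) \<Rightarrow> nat \<Rightarrow> nat \<Rightarrow> nat \<Rightarrow> nat \<Rightarrow> bool" where
  "switchable G \<phi> a b x y \<longleftrightarrow> distinct [a, b, x, y] \<and> {a, b} \<in> G \<and> {x, y} \<in> G
     \<and> {a, x} \<notin> G \<and> {b, y} \<notin> G \<and> \<phi> {x, y} = \<phi> {a, b}"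

lemma distinct_switch_doubletons:
  assumes "distinct [a, b, x, y]"
  shows "{a, x} \<noteq> {b, y}" "{a, x} \<noteq> {a, b}" "{a, x} \<noteq> {x, y}"
    "{b, y} \<noteq> {a, b}" "{b, y} \<noteq> {x, y}" "{a, b} \<noteq> {x, y}"
  using assms by (auto simp: doubleton_eq_iff)

lemma mem_switch_graph:
  "e \<in> switch_graph G a b x y \<longleftrightarrow> e = {a, x} \<or> e = {b, y} \<or> (e \<in> G \<and> e \<noteq> {a, b} \<and> e \<noteq> {x, y})"
  unfolding switch_graph_def by blast

lemma switch_colouring_apply:
  assumes "distinct [a, b, x, y]"
  shows "switch_colouring \<phi> a b x y e =
    (if e = {a, x} \<or> e = {b, y} then \<phi> {a, b} else if e = {a, b} \<or> e = {x, y} then 0 else \<phi> e)"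
  using distinct_switch_doubletons[OF assms] unfolding switch_colouring_def by auto

lemma card_incident_disjoint_doubletons:
  assumes "distinct [p, q, r, s]"
  shows "card {e \<in> {{p, q}, {r, s}}. v \<in> e} = (if v \<in> {p, q, r, s} then 1 else 0)"
proof -
  consider "v \<in> {p, q}" | "v \<in> {r, s}" | "v \<notin> {p, q, r, s}" by blast
  then show ?thesis
  proof cases
    case 1
    then have "{e \<in> {{p, q}, {r, s}}. v \<in> e} = {{p, q}}" using assms by auto
    then show ?thesis using 1 by auto
  next
    case 2
    then have "{e \<in> {{p, q}, {r, s}}. v \<in> e} = {{r, s}}" using assms by auto
    then show ?thesis using 2 by auto
  next
    case 3
    then have "{e \<in> {{p, q}, {r, s}}. v \<in> e} = {}" by auto
    then show ?thesis using 3 by simp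
  qed
qed

lemma card_incident_switch_graph:
  assumes "finite S" "distinct [a, b, x, y]"
    and "{a, b} \<in> S" "{x, y} \<in> S" "{a, x} \<notin> S" "{b, y} \<notin> S"
  shows "card {e \<in> switch_graph S a b x y. v \<in> e} = card {e \<in> S. v \<in> e}"
proof -
  let ?I = "\<lambda>F. {e \<in> F. v \<in> e}"
  let ?kept = "?I S - {{a, b}, {x, y}}"
  have fin: "finite ?kept" using assms(1) by simp
  have "card (?I (switch_graph S a b x y)) = card (?I {{a, x}, {b, y}} \<union> ?kept)"
    unfolding switch_graph_def by (rule arg_cong[where f = card]) blast
  also have "\<dots> = card (?I {{a, x}, {b, y}}) + card ?kept"
    using assms(5,6) fin by (intro card_Un_disjoint) auto
  also have "card (?I {{a, x}, {b, y}}) = card (?I {{a, b}, {x, y}})"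
  proof -
    have "card (?I {{a, x}, {b, y}}) = (if v \<in> {a, x, b, y} then 1 else 0)"
      using assms(2) by (intro card_incident_disjoint_doubletons) auto
    also have "{a, x, b, y} = {a, b, x, y}" by blast
    also have "(if v \<in> {a, b, x, y} then 1 else 0) = card (?I {{a, b}, {x, y}})"
      by (rule card_incident_disjoint_doubletons[OF assms(2), symmetric])
    finally show ?thesis .
  qed
  also have "card (?I {{a, b}, {x, y}}) + card ?kept = card (?I {{a, b}, {x, y}} \<union> ?kept)"
    using fin by (intro card_Un_disjoint[symmetric]) auto
  also have "?I {{a, b}, {x, y}} \<union> ?kept = ?I S"
    using assms(3,4) by blast
  finally show ?thesis .
qed

lemma switch_graph_subset_all_edges:
  assumes "G \<subseteq> all_edges n" "distinct [a, b, x, y]" "{a, b} \<in> G" "{x, y} \<in> G"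
  shows "switch_graph G a b x y \<subseteq> all_edges n"
proof -
  have "{a, b} \<in> all_edges n" "{x, y} \<in> all_edges n"
    using assms(1,3,4) by blast+
  then have "a < n" "b < n" "x < n" "y < n"
    unfolding doubleton_in_all_edges_iff by auto
  then have "{a, x} \<in> all_edges n" "{b, y} \<in> all_edges n"
    using assms(2) unfolding doubleton_in_all_edges_iff by auto
  then show ?thesis
    using assms(1) unfolding switch_graph_def by blast
qed

lemma perfect_matching_switch_graph:
  assumes "perfect_matching n M" "distinct [a, b, x, y]"
    and "{a, b} \<in> M" "{x, y} \<in> M" "{a, x} \<notin> M" "{b, y} \<notin> M"
  shows "perfect_matching n (switch_graph M a b x y)"
proof -
  have M: "M \<subseteq> all_edges n" using assms(1) unfolding perfect_matching_def by blast
  then have "finite M" using finite_all_edges finite_subset by blast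
  then show ?thesis
    using assms M switch_graph_subset_all_edges[OF M assms(2-4)]
    by (simp add: perfect_matching_iff_card card_incident_switch_graph)
qed

lemma colour_class_switch:
  assumes "switchable G \<phi> a b x y"
  shows "{e \<in> switch_graph G a b x y. switch_colouring \<phi> a b x y e = d} =
    (if d = \<phi> {a, b} then switch_graph {e \<in> G. \<phi> e = d} a b x y else {e \<in> G. \<phi> e = d})"
proof -
  have dist: "distinct [a, b, x, y]" and "{a, x} \<notin> G" "{b, y} \<notin> G" "\<phi> {x, y} = \<phi> {a, b}"
    using assms unfolding switchable_def by auto
  note neq = distinct_switch_doubletons[OF dist]
  show ?thesis
  proof (rule set_eqI)
    fix e
    consider "e = {a, x} \<or> e = {b, y}" | "e = {a, b} \<or> e = {x, y}"
      | "e \<noteq> {a, x}" "e \<noteq> {b, y}" "e \<noteq> {a, b}" "e \<noteq> {x, y}"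
      by blast
    then show "e \<in> {e \<in> switch_graph G a b x y. switch_colouring \<phi> a b x y e = d} \<longleftrightarrow>
      e \<in> (if d = \<phi> {a, b} then switch_graph {e \<in> G. \<phi> e = d} a b x y else {e \<in> G. \<phi> e = d})"
    proof cases
      case 1
      then consider "e = {a, x}" | "e = {b, y}" by blast
      then show ?thesis using neq \<open>{a, x} \<notin> G\<close> \<open>{b, y} \<notin> G\<close>
        by cases (simp_all add: mem_switch_graph switch_colouring_apply[OF dist])
    next
      case 2
      then consider "e = {a, b}" | "e = {x, y}" by blast
      then show ?thesis using neq \<open>\<phi> {x, y} = \<phi> {a, b}\<close>
        by cases (simp_all add: mem_switch_graph switch_colouring_apply[OF dist])
    next
      case 3 then show ?thesis by (simp add: mem_switch_graph switch_colouring_apply[OF dist])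
    qed
  qed
qed

lemma switch_in_col_graphs:
  assumes X: "(G, \<phi>) \<in> col_graphs n D" and sw: "switchable G \<phi> a b x y"
  shows "(switch_graph G a b x y, switch_colouring \<phi> a b x y) \<in> col_graphs n D"
proof -
  let ?G = "switch_graph G a b x y" and ?\<phi> = "switch_colouring \<phi> a b x y"
  have dist: "distinct [a, b, x, y]" and ab: "{a, b} \<in> G" and xy: "{x, y} \<in> G"
    and "{a, x} \<notin> G" "{b, y} \<notin> G" and same_colour: "\<phi> {x, y} = \<phi> {a, b}"
    using sw unfolding switchable_def by auto
  note facts = col_graphsD[OF X]
  have colours: "?\<phi> e \<in> D" if e: "e \<in> ?G" for e
  proof -
    consider "e = {a, x} \<or> e = {b, y}" | "e \<in> G" "e \<noteq> {a, b}" "e \<noteq> {x, y}" "e \<noteq> {a, x}" "e \<noteq> {b, y}"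
      using e \<open>{a, x} \<notin> G\<close> \<open>{b, y} \<notin> G\<close> unfolding mem_switch_graph by blast
    then show ?thesis
      using facts(3) ab unfolding switch_colouring_apply[OF dist] by cases auto
  qed
  have matchings: "perfect_matching n {e \<in> ?G. ?\<phi> e = d}" if "d \<in> D" for d
  proof (cases "d = \<phi> {a, b}")
    case True
    then show ?thesis
      unfolding colour_class_switch[OF sw]
      using facts(5)[OF that] dist ab xy \<open>{a, x} \<notin> G\<close> \<open>{b, y} \<notin> G\<close> same_colour
      by (auto intro: perfect_matching_switch_graph)
  qed (use colour_class_switch[OF sw] facts(5)[OF that] in simp)
  have "?G \<subseteq> all_edges n"
    using switch_graph_subset_all_edges[OF facts(1) dist ab xy] .
  moreover have "?\<phi> e = 0" if "e \<notin> ?G" for e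
  proof -
    have "e \<noteq> {a, x}" "e \<noteq> {b, y}" "e \<notin> G \<or> e = {a, b} \<or> e = {x, y}"
      using that unfolding mem_switch_graph by auto
    then show ?thesis
      using facts(4) unfolding switch_colouring_apply[OF dist] by auto
  qed
  ultimately show ?thesis
    unfolding col_graphs_def
    using colours matchings degree_eq_card_colours[OF colours matchings] by auto
qed

lemma switch_back:
  assumes "switchable G \<phi> a b x y" "\<phi> {a, x} = 0" "\<phi> {b, y} = 0"
  shows "switch_graph (switch_graph G a b x y) a x b y = G"
    and "switch_colouring (switch_colouring \<phi> a b x y) a x b y = \<phi>"
proof -
  have dist: "distinct [a, b, x, y]" using assms(1) unfolding switchable_def by simp
  then have dist': "distinct [a, x, b, y]" by auto
  show "switch_graph (switch_graph G a b x y) a x b y = G"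
    using assms(1) distinct_switch_doubletons[OF dist]
    unfolding switchable_def switch_graph_def by blast
  show "switch_colouring (switch_colouring \<phi> a b x y) a x b y = \<phi>"
  proof
    fix e
    have "\<phi> {x, y} = \<phi> {a, b}" using assms(1) unfolding switchable_def by simp
    moreover consider "e = {a, x}" | "e = {b, y}" | "e = {a, b}" | "e = {x, y}"
      | "e \<notin> {{a, x}, {b, y}, {a, b}, {x, y}}"
      by blast
    ultimately show "switch_colouring (switch_colouring \<phi> a b x y) a x b y e = \<phi> e"
      using assms(2,3) distinct_switch_doubletons[OF dist]
      by cases (simp_all add: switch_colouring_apply[OF dist] switch_colouring_apply[OF dist'] insert_commute)
  qed
qed

definition edge_pairs :: "nat set set \<Rightarrow> nat set \<Rightarrow> nat set \<Rightarrow> (nat \<times> nat) set" where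
  "edge_pairs G A B = {(u, v). u \<in> A \<and> v \<in> B \<and> {u, v} \<in> G}"

lemma e_G_eq_card_edge_pairs: "e_G G A B = card (edge_pairs G A B)"
  unfolding e_G_def edge_pairs_def ..

lemma finite_edge_pairs: "finite A \<Longrightarrow> finite B \<Longrightarrow> finite (edge_pairs G A B)"
  by (rule finite_subset[of _ "A \<times> B"]) (auto simp: edge_pairs_def)

lemma e_G_le_card_mult: "finite A \<Longrightarrow> finite B \<Longrightarrow> e_G G A B \<le> card A * card B"
  unfolding e_G_eq_card_edge_pairs card_cartesian_product[symmetric]
  by (rule card_mono) (auto simp: edge_pairs_def)

lemma edge_pairs_switch_graph:
  assumes "switchable G \<phi> a b x y" "x \<notin> A \<union> B" "y \<notin> A \<union> B"
  shows "edge_pairs (switch_graph G a b x y) A B = edge_pairs G A B - {(a, b), (b, a)}"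
proof (rule set_eqI, clarify)
  fix u v
  show "(u, v) \<in> edge_pairs (switch_graph G a b x y) A B \<longleftrightarrow> (u, v) \<in> edge_pairs G A B - {(a, b), (b, a)}"
  proof (cases "u \<in> A \<and> v \<in> B")
    case True
    then have "{u, v} \<noteq> {a, x}" "{u, v} \<noteq> {b, y}" "{u, v} \<noteq> {x, y}"
      using assms(2,3) by (auto simp: doubleton_eq_iff)
    moreover have "{u, v} = {a, b} \<longleftrightarrow> (u, v) = (a, b) \<or> (u, v) = (b, a)"
      by (auto simp: doubleton_eq_iff)
    ultimately show ?thesis
      using True unfolding edge_pairs_def mem_switch_graph by auto
  qed (auto simp: edge_pairs_def)
qed

lemma e_G_switch_graph:
  assumes "switchable G \<phi> a b x y" "x \<notin> A \<union> B" "y \<notin> A \<union> B"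
    and "(a, b) \<in> edge_pairs G A B" "finite A" "finite B"
  shows "e_G (switch_graph G a b x y) A B + 1 = e_G G A B \<or> e_G (switch_graph G a b x y) A B + 2 = e_G G A B"
proof -
  let ?P = "edge_pairs G A B"
  have "finite ?P" using assms(5,6) by (rule finite_edge_pairs)
  moreover have "a \<noteq> b" using assms(1) unfolding switchable_def by simp
  ultimately have "card ?P = card (?P \<inter> {(a, b), (b, a)}) + card (?P - {(a, b), (b, a)})"
    by (intro card_Int_Diff)
  moreover have "card (?P \<inter> {(a, b), (b, a)}) \<in> {1, 2}"
    using assms(4) \<open>a \<noteq> b\<close> by (cases "(b, a) \<in> ?P") (auto simp: Int_insert_right)
  ultimately show ?thesis
    unfolding e_G_eq_card_edge_pairs edge_pairs_switch_graph[OF assms(1-3)] by auto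
qed

section \<open>Counting switchings\<close>

definition switch_partners ::
    "nat set set \<Rightarrow> (nat set \<Rightarrow> nat) \<Rightarrow> nat set \<Rightarrow> nat set \<Rightarrow> nat \<Rightarrow> nat \<Rightarrow> (nat \<times> nat) set" where
  "switch_partners G \<phi> A B a b = {(x, y). x \<notin> A \<union> B \<and> y \<notin> A \<union> B \<and> switchable G \<phi> a b x y}"

lemma finite_switch_partners:
  assumes "G \<subseteq> all_edges n"
  shows "finite (switch_partners G \<phi> A B a b)"
proof (rule finite_subset)
  show "switch_partners G \<phi> A B a b \<subseteq> {..<n} \<times> {..<n}"
  proof
    fix p assume "p \<in> switch_partners G \<phi> A B a b"
    then obtain x y where "p = (x, y)" "{x, y} \<in> all_edges n"
      using assms unfolding switch_partners_def switchable_def by blast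
    then show "p \<in> {..<n} \<times> {..<n}" unfolding doubleton_in_all_edges_iff by simp
  qed
qed simp

lemma partner_pair_in_switch_partners:
  assumes X: "(G, \<phi>) \<in> col_graphs n D" and ab: "(a, b) \<in> edge_pairs G A B"
  defines "p \<equiv> partner {e \<in> G. \<phi> e = \<phi> {a, b}}"
  assumes "x < n" "x \<notin> A \<union> B" "p x \<notin> A \<union> B" "{a, x} \<notin> G" "{b, p x} \<notin> G"
  shows "(x, p x) \<in> switch_partners G \<phi> A B a b"
proof -
  have ab_G: "{a, b} \<in> G" and "a \<in> A" "b \<in> B" using ab unfolding edge_pairs_def by auto
  have "{a, b} \<in> all_edges n" using col_graphsD(1)[OF X] ab_G by blast
  then have "a \<noteq> b" unfolding doubleton_in_all_edges_iff by simp
  have "perfect_matching n {e \<in> G. \<phi> e = \<phi> {a, b}}"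
    using col_graphsD(5)[OF X] col_graphsD(3)[OF X ab_G] by blast
  then have edge: "{x, p x} \<in> {e \<in> G. \<phi> e = \<phi> {a, b}}"
    unfolding p_def using partner_in \<open>x < n\<close> by blast
  then have "{x, p x} \<in> all_edges n" using col_graphsD(1)[OF X] by blast
  then have "distinct [a, b, x, p x]"
    using assms(5,6) \<open>a \<in> A\<close> \<open>b \<in> B\<close> \<open>a \<noteq> b\<close> unfolding doubleton_in_all_edges_iff by auto
  then show ?thesis
    using edge ab_G assms(5-8) unfolding switch_partners_def switchable_def by simp
qed

lemma card_switch_partners_ge:
  assumes X: "(G, \<phi>) \<in> col_graphs n D" and AB: "A \<subseteq> {..<n}" "B \<subseteq> {..<n}"
    and "card A = card D" "card B = card D" and ab: "(a, b) \<in> edge_pairs G A B"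
  shows "n - 6 * card D \<le> card (switch_partners G \<phi> A B a b)"
proof -
  note facts = col_graphsD[OF X]
  let ?M = "{e \<in> G. \<phi> e = \<phi> {a, b}}"
  let ?p = "partner ?M"
  let ?N = "\<lambda>v. {w. {v, w} \<in> G}"
  let ?pre = "\<lambda>T. {v \<in> {..<n}. ?p v \<in> T}"
  let ?bad = "(A \<union> B) \<union> ?pre (A \<union> B) \<union> ?N a \<union> ?pre (?N b)"
  have ab_G: "{a, b} \<in> G" using ab unfolding edge_pairs_def by auto
  then have "a < n" "b < n"
    using facts(1) doubleton_in_all_edges_iff[of a b n] by auto
  have M: "perfect_matching n ?M" using facts(5) facts(3)[OF ab_G] by blast
  have "?N v \<subseteq> {..<n}" for v
  proof
    fix w assume "w \<in> ?N v"
    then have "{v, w} \<in> all_edges n" using facts(1) by blast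
    then show "w \<in> {..<n}" unfolding doubleton_in_all_edges_iff by simp
  qed
  then have fin: "finite A" "finite B" "finite (?N a)" "finite (?N b)"
    using AB finite_subset by blast+
  have card_N: "card (?N v) = card D" if "v < n" for v
    using facts(2)[OF that] card_neighbours[OF facts(1), of v] by simp
  have "card ?bad \<le> card (A \<union> B) + card (?pre (A \<union> B)) + card (?N a) + card (?pre (?N b))"
    using card_Un_le[of "A \<union> B \<union> ?pre (A \<union> B) \<union> ?N a" "?pre (?N b)"]
      card_Un_le[of "A \<union> B \<union> ?pre (A \<union> B)" "?N a"] card_Un_le[of "A \<union> B" "?pre (A \<union> B)"]
    by linarith
  also have "\<dots> \<le> 2 * card D + 2 * card D + card D + card D"
    using card_Un_le[of A B] card_partner_preimage_le[OF M, of "A \<union> B"]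
      card_partner_preimage_le[OF M, of "?N b"] card_N[OF \<open>a < n\<close>] card_N[OF \<open>b < n\<close>] fin assms(4,5)
    by (intro add_mono) auto
  finally have "n - 6 * card D \<le> card ({..<n} - ?bad)"
    using diff_card_le_card_Diff[of ?bad "{..<n}"] fin by simp
  also have "\<dots> \<le> card (switch_partners G \<phi> A B a b)"
  proof (rule card_inj_on_le[of "\<lambda>x. (x, ?p x)"])
    show "inj_on (\<lambda>x. (x, ?p x)) ({..<n} - ?bad)" by (rule inj_onI) simp
    show "finite (switch_partners G \<phi> A B a b)" by (rule finite_switch_partners[OF facts(1)])
    show "(\<lambda>x. (x, ?p x)) ` ({..<n} - ?bad) \<subseteq> switch_partners G \<phi> A B a b"
      using partner_pair_in_switch_partners[OF X ab] by auto
  qed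
  finally show ?thesis .
qed

definition switchings ::
    "nat set set \<Rightarrow> (nat set \<Rightarrow> nat) \<Rightarrow> nat set \<Rightarrow> nat set \<Rightarrow> ((nat \<times> nat) \<times> (nat \<times> nat)) set" where
  "switchings G \<phi> A B = Sigma (edge_pairs G A B) (\<lambda>(a, b). switch_partners G \<phi> A B a b)"

lemma card_switchings_ge:
  assumes X: "(G, \<phi>) \<in> col_graphs n D" and AB: "A \<subseteq> {..<n}" "B \<subseteq> {..<n}"
    and "card A = card D" "card B = card D"
  shows "e_G G A B * (n - 6 * card D) \<le> card (switchings G \<phi> A B)"
proof -
  let ?P = "edge_pairs G A B" and ?F = "\<lambda>(a, b). switch_partners G \<phi> A B a b"
  have "finite A" "finite B" using finite_subset[OF AB(1)] finite_subset[OF AB(2)] by simp_all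
  then have "card (switchings G \<phi> A B) = (\<Sum>p\<in>?P. card (?F p))"
    unfolding switchings_def using finite_switch_partners[OF col_graphsD(1)[OF X]]
    by (intro card_SigmaI finite_edge_pairs) (auto simp: split_beta)
  moreover have "n - 6 * card D \<le> card (?F p)" if "p \<in> ?P" for p
    using card_switch_partners_ge[OF assms, of "fst p" "snd p"] that by (simp add: split_beta)
  ultimately show ?thesis
    using sum_bounded_below[of ?P "n - 6 * card D" "\<lambda>p. card (?F p)"]
    unfolding e_G_eq_card_edge_pairs by simp
qed

lemma finite_switchings:
  assumes "(G, \<phi>) \<in> col_graphs n D" "A \<subseteq> {..<n}" "B \<subseteq> {..<n}"
  shows "finite (switchings G \<phi> A B)"
proof -
  have "finite A" "finite B" using finite_subset[OF assms(2)] finite_subset[OF assms(3)] by simp_all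
  then show ?thesis
    unfolding switchings_def using finite_switch_partners[OF col_graphsD(1)[OF assms(1)]]
    by (intro finite_SigmaI finite_edge_pairs) (auto simp: split_beta)
qed

definition switch_record ::
    "(nat set set \<times> (nat set \<Rightarrow> nat)) \<times> (nat \<times> nat) \<times> (nat \<times> nat)
      \<Rightarrow> (nat set set \<times> (nat set \<Rightarrow> nat)) \<times> nat \<times> nat \<times> nat" where
  "switch_record = (\<lambda>((G, \<phi>), (a, b), (x, y)).
     ((switch_graph G a b x y, switch_colouring \<phi> a b x y), a, b, \<phi> {a, b}))"

lemma switch_edges_coloured:
  assumes "distinct [a, b, x, y]"
  shows "{a, x} \<in> {e \<in> switch_graph G a b x y. switch_colouring \<phi> a b x y e = \<phi> {a, b}}"
    and "{b, y} \<in> {e \<in> switch_graph G a b x y. switch_colouring \<phi> a b x y e = \<phi> {a, b}}"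
  by (simp_all add: mem_switch_graph switch_colouring_apply[OF assms])

text \<open>In the switched graph, x and y are the partners of a and b in the colour class of the
  removed edge ab; so a switching is determined by its result, a, b and that colour.\<close>

lemma inj_on_switch_record:
  "inj_on switch_record (Sigma (col_graphs n D) (\<lambda>(G, \<phi>). switchings G \<phi> A B))"
proof (rule inj_onI)
  fix r r' assume r: "r \<in> Sigma (col_graphs n D) (\<lambda>(G, \<phi>). switchings G \<phi> A B)"
    and r': "r' \<in> Sigma (col_graphs n D) (\<lambda>(G, \<phi>). switchings G \<phi> A B)"
    and eq: "switch_record r = switch_record r'"
  obtain G \<phi> a b x y where r_eq: "r = ((G, \<phi>), (a, b), (x, y))" by (metis surj_pair)
  obtain G' \<phi>' a' b' x' y' where r'_eq: "r' = ((G', \<phi>'), (a', b'), (x', y'))" by (metis surj_pair)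
  have X: "(G, \<phi>) \<in> col_graphs n D" "(G', \<phi>') \<in> col_graphs n D"
    and sw: "switchable G \<phi> a b x y" "switchable G' \<phi>' a' b' x' y'"
    using r r' unfolding r_eq r'_eq switchings_def switch_partners_def by auto
  from eq have ab: "a' = a" "b' = b"
    unfolding switch_record_def r_eq r'_eq by simp_all
  from eq have same: "\<phi>' {a, b} = \<phi> {a, b}" "switch_graph G' a b x' y' = switch_graph G a b x y"
    "switch_colouring \<phi>' a b x' y' = switch_colouring \<phi> a b x y"
    unfolding switch_record_def r_eq r'_eq ab by simp_all
  have sw': "switchable G' \<phi>' a b x' y'" using sw(2) unfolding ab .
  have dist: "distinct [a, b, x, y]" "distinct [a, b, x', y']"
    using sw(1) sw' unfolding switchable_def by simp_all
  let ?M = "{e \<in> switch_graph G a b x y. switch_colouring \<phi> a b x y e = \<phi> {a, b}}"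
  have "\<phi> {a, b} \<in> D" using col_graphsD(3)[OF X(1)] sw(1) unfolding switchable_def by simp
  then have M: "perfect_matching n ?M" by (rule col_graphsD(5)[OF switch_in_col_graphs[OF X(1) sw(1)]])
  have ax: "{a, x} \<in> ?M" "{b, y} \<in> ?M" "{a, x'} \<in> ?M" "{b, y'} \<in> ?M"
    using switch_edges_coloured[OF dist(1)] switch_edges_coloured[OF dist(2), of G' \<phi>']
    unfolding same by simp_all
  have "partner ?M a = x" "partner ?M b = y" "partner ?M a = x'" "partner ?M b = y'"
    using partner_eq[OF M ax(1)] partner_eq[OF M ax(2)] partner_eq[OF M ax(3)] partner_eq[OF M ax(4)] .
  then have xy: "x' = x" "y' = y" by simp_all
  have "\<phi> {a, x} = 0" "\<phi> {b, y} = 0" "\<phi>' {a, x} = 0" "\<phi>' {b, y} = 0"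
    using sw(1) sw' col_graphsD(4)[OF X(1)] col_graphsD(4)[OF X(2)]
    unfolding xy switchable_def by simp_all
  then have "G' = G" "\<phi>' = \<phi>"
    using switch_back[OF sw(1)] switch_back[OF sw'[unfolded xy]] same(2,3)
    unfolding xy by simp_all
  then show "r = r'" unfolding r_eq r'_eq ab xy by simp
qed

lemma card_level_mult_le:
  assumes D: "finite D" and AB: "A \<subseteq> {..<n}" "B \<subseteq> {..<n}" "card A = card D" "card B = card D"
  shows "card {X \<in> col_graphs n D. e_G (fst X) A B = k} * (k * (n - 6 * card D))
    \<le> card {Y \<in> col_graphs n D. e_G (fst Y) A B + 1 = k \<or> e_G (fst Y) A B + 2 = k} * card D ^ 3"
proof -
  let ?level = "{X \<in> col_graphs n D. e_G (fst X) A B = k}"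
  let ?lower = "{Y \<in> col_graphs n D. e_G (fst Y) A B + 1 = k \<or> e_G (fst Y) A B + 2 = k}"
  let ?R = "Sigma ?level (\<lambda>(G, \<phi>). switchings G \<phi> A B)"
  have fin: "finite (col_graphs n D)" "finite A" "finite B"
    using finite_col_graphs[OF D] finite_subset[OF AB(1)] finite_subset[OF AB(2)] by simp_all
  have "card ?R = (\<Sum>X\<in>?level. card ((\<lambda>(G, \<phi>). switchings G \<phi> A B) X))"
    using fin(1) finite_switchings[OF _ AB(1,2)] by (intro card_SigmaI) (auto simp: split_beta)
  moreover have "k * (n - 6 * card D) \<le> card ((\<lambda>(G, \<phi>). switchings G \<phi> A B) X)" if "X \<in> ?level" for X
    using that card_switchings_ge[of "fst X" "snd X", OF _ AB] by (simp add: split_beta)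
  ultimately have "card ?level * (k * (n - 6 * card D)) \<le> card ?R"
    using sum_bounded_below[of ?level "k * (n - 6 * card D)"] by simp
  also have "card ?R = card (switch_record ` ?R)"
    by (rule card_image[symmetric], rule inj_on_subset[OF inj_on_switch_record]) auto
  also have "\<dots> \<le> card (?lower \<times> A \<times> B \<times> D)"
  proof (rule card_mono)
    show "finite (?lower \<times> A \<times> B \<times> D)" using fin D by simp
    show "switch_record ` ?R \<subseteq> ?lower \<times> A \<times> B \<times> D"
    proof (rule image_subsetI)
      fix r assume "r \<in> ?R"
      moreover obtain G \<phi> a b x y where r: "r = ((G, \<phi>), (a, b), (x, y))" by (metis surj_pair)
      ultimately have X: "(G, \<phi>) \<in> col_graphs n D" and k: "e_G G A B = k"
        and ab: "(a, b) \<in> edge_pairs G A B" and xy: "(x, y) \<in> switch_partners G \<phi> A B a b"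
        unfolding switchings_def by auto
      have sw: "switchable G \<phi> a b x y" and "x \<notin> A \<union> B" "y \<notin> A \<union> B"
        using xy unfolding switch_partners_def by auto
      have "(switch_graph G a b x y, switch_colouring \<phi> a b x y) \<in> ?lower"
        using switch_in_col_graphs[OF X sw] e_G_switch_graph[OF sw \<open>x \<notin> A \<union> B\<close> \<open>y \<notin> A \<union> B\<close> ab fin(2,3)] k
        by simp
      moreover have "a \<in> A" "b \<in> B" "{a, b} \<in> G" using ab unfolding edge_pairs_def by auto
      ultimately show "switch_record r \<in> ?lower \<times> A \<times> B \<times> D"
        using col_graphsD(3)[OF X] unfolding switch_record_def r by simp
    qed
  qed
  also have "\<dots> = card ?lower * card D ^ 3"
    using AB(3,4) by (simp add: card_cartesian_product power3_eq_cube)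
  finally show ?thesis .
qed

section \<open>The tail of e_G(A,B)\<close>

lemma two_step_recurrence_bound:
  fixes M :: "nat \<Rightarrow> nat"
  assumes le: "\<And>k. M k \<le> T" and rec: "\<And>k. k0 \<le> k \<Longrightarrow> 6 * M k \<le> M (k - 1) + M (k - 2)"
    and "2 \<le> k0"
  shows "M k * 2 ^ (k + 1) \<le> T * 2 ^ k0"
proof (induction k rule: less_induct)
  case (less k)
  show ?case
  proof (cases "k0 \<le> k")
    case False
    then have "(2::nat) ^ (k + 1) \<le> 2 ^ k0" by (intro power_increasing) auto
    then show ?thesis using le[of k] by (intro mult_le_mono) auto
  next
    case True
    then have k: "k = Suc (Suc (k - 2))" using \<open>2 \<le> k0\<close> by simp
    have "6 * M k * 2 ^ k \<le> (M (k - 1) + M (k - 2)) * 2 ^ k"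
      using rec[OF True] by simp
    also have "\<dots> = M (k - 1) * 2 ^ (k - 1 + 1) + 2 * (M (k - 2) * 2 ^ (k - 2 + 1))"
      by (subst (1 2 3) k) (simp add: algebra_simps)
    also have "\<dots> \<le> 3 * (T * 2 ^ k0)"
      using less.IH[of "k - 1"] less.IH[of "k - 2"] True \<open>2 \<le> k0\<close> by simp
    finally show ?thesis by simp
  qed
qed

lemma sum_half_powers_le: "(\<Sum>k = K..N. (1/2::real) ^ (k + 1)) \<le> (1/2) ^ K"
proof (cases "K \<le> N")
  case True
  have "(\<Sum>k = K..N. (1/2::real) ^ (k + 1)) = (1 - 1/2) * (\<Sum>k = K..N. (1/2) ^ k)"
    by (simp add: sum_distrib_left)
  also have "\<dots> = (1/2) ^ K - (1/2) ^ Suc N"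
    by (rule sum_gp_multiplied[OF True])
  finally show ?thesis by simp
qed simp

lemma card_level_recurrence:
  assumes D: "finite D" "0 < card D" and AB: "A \<subseteq> {..<n}" "B \<subseteq> {..<n}" "card A = card D" "card B = card D"
    and k0: "6 * card D ^ 3 \<le> k0 * (n - 6 * card D)" "k0 \<le> k"
  shows "6 * card {X \<in> col_graphs n D. e_G (fst X) A B = k}
    \<le> card {X \<in> col_graphs n D. e_G (fst X) A B = k - 1} + card {X \<in> col_graphs n D. e_G (fst X) A B = k - 2}"
    (is "6 * ?M k \<le> ?M (k - 1) + ?M (k - 2)")
proof -
  let ?C = "col_graphs n D" and ?d = "card D"
  let ?lower = "{Y \<in> ?C. e_G (fst Y) A B + 1 = k \<or> e_G (fst Y) A B + 2 = k}"
  have "card ?lower \<le> card ({X \<in> ?C. e_G (fst X) A B = k - 1} \<union> {X \<in> ?C. e_G (fst X) A B = k - 2})"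
    using finite_col_graphs[OF D(1)] by (intro card_mono) auto
  also have "\<dots> \<le> ?M (k - 1) + ?M (k - 2)" by (rule card_Un_le)
  finally have lower: "card ?lower \<le> ?M (k - 1) + ?M (k - 2)" .
  have "6 * ?d ^ 3 \<le> k * (n - 6 * ?d)"
    using order_trans[OF k0(1) mult_le_mono1[OF k0(2)]] .
  then have "?M k * (6 * ?d ^ 3) \<le> ?M k * (k * (n - 6 * ?d))" by (rule mult_le_mono2)
  also have "\<dots> \<le> card ?lower * ?d ^ 3"
    by (rule card_level_mult_le[OF D(1) AB])
  also have "\<dots> \<le> (?M (k - 1) + ?M (k - 2)) * ?d ^ 3" using lower by (rule mult_le_mono1)
  finally have "(6 * ?M k) * ?d ^ 3 \<le> (?M (k - 1) + ?M (k - 2)) * ?d ^ 3" by (simp add: ac_simps)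
  then show ?thesis using D(2) by simp
qed

lemma card_e_G_ge_le:
  assumes D: "finite D" "0 < card D" and AB: "A \<subseteq> {..<n}" "B \<subseteq> {..<n}" "card A = card D" "card B = card D"
    and k0: "2 \<le> k0" "6 * card D ^ 3 \<le> k0 * (n - 6 * card D)"
  shows "real (card {X \<in> col_graphs n D. K \<le> e_G (fst X) A B})
    \<le> real (card (col_graphs n D)) * 2 ^ k0 / 2 ^ K"
proof -
  let ?C = "col_graphs n D" and ?d = "card D"
  define M where "M k = card {X \<in> ?C. e_G (fst X) A B = k}" for k
  have fin: "finite ?C" "finite A" "finite B"
    using finite_col_graphs[OF D(1)] finite_subset[OF AB(1)] finite_subset[OF AB(2)] by simp_all
  have rec: "6 * M k \<le> M (k - 1) + M (k - 2)" if "k0 \<le> k" for k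
    unfolding M_def by (rule card_level_recurrence[OF D AB k0(2) that])
  have decay: "real (M k) \<le> real (card ?C) * 2 ^ k0 * (1/2) ^ (k + 1)" for k
  proof -
    have "M k \<le> card ?C" for k unfolding M_def using fin(1) by (intro card_mono) auto
    then have "M k * 2 ^ (k + 1) \<le> card ?C * 2 ^ k0"
      by (rule two_step_recurrence_bound[OF _ rec k0(1)])
    then have "real (M k * 2 ^ (k + 1)) \<le> real (card ?C * 2 ^ k0)"
      by (simp only: of_nat_le_iff)
    then show ?thesis by (simp add: power_one_over field_simps)
  qed
  have levels: "{X \<in> ?C. K \<le> e_G (fst X) A B} = (\<Union>k \<in> {K..?d * ?d}. {X \<in> ?C. e_G (fst X) A B = k})"
    using e_G_le_card_mult[OF fin(2,3)] AB(3,4) by fastforce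
  have "card {X \<in> ?C. K \<le> e_G (fst X) A B} = (\<Sum>k = K..?d * ?d. M k)"
    unfolding levels M_def using fin(1) by (intro card_UN_disjoint) auto
  then have "real (card {X \<in> ?C. K \<le> e_G (fst X) A B}) = (\<Sum>k = K..?d * ?d. real (M k))"
    by simp
  also have "\<dots> \<le> (\<Sum>k = K..?d * ?d. real (card ?C) * 2 ^ k0 * (1/2) ^ (k + 1))"
    by (intro sum_mono decay)
  also have "\<dots> \<le> real (card ?C) * 2 ^ k0 * (1/2) ^ K"
    unfolding sum_distrib_left[symmetric] by (intro mult_left_mono sum_half_powers_le) simp
  finally show ?thesis by (simp add: field_simps)
qed

lemma card_not_quasirandom_le:
  assumes "finite D" "0 < card D"
    and k0: "2 \<le> k0" "6 * card D ^ 3 \<le> k0 * (n - 6 * card D)"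
    and K: "real K \<le> 8 * (real (card D) - 1) ^ 3 / real n"
  shows "real (card {X \<in> col_graphs n D. \<not> quasirandom n D (fst X)})
    \<le> 4 ^ n * (real (card (col_graphs n D)) * 2 ^ k0 / 2 ^ K)"
proof -
  let ?C = "col_graphs n D"
  let ?pairs = "{(A, B). A \<subseteq> {..<n} \<and> B \<subseteq> {..<n} \<and> card A = card D \<and> card B = card D}"
  let ?heavy = "\<lambda>(A, B). {X \<in> ?C. K \<le> e_G (fst X) A B}"
  let ?bad = "{X \<in> ?C. \<not> quasirandom n D (fst X)}"
  have pairs: "?pairs \<subseteq> Pow {..<n} \<times> Pow {..<n}" by auto
  then have "finite ?pairs" by (rule finite_subset) simp
  have "card ?pairs \<le> card (Pow {..<n} \<times> Pow {..<n::nat})" by (rule card_mono[OF _ pairs]) simp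
  then have card_pairs: "real (card ?pairs) \<le> 4 ^ n"
    by (simp add: card_cartesian_product card_Pow power_mult_distrib[symmetric])
  have "?bad \<subseteq> (\<Union>p \<in> ?pairs. ?heavy p)"
  proof
    fix X assume "X \<in> ?bad"
    then obtain A B where "(A, B) \<in> ?pairs" and "\<not> real (e_G (fst X) A B) < 8 * (real (card D) - 1) ^ 3 / real n"
      unfolding quasirandom_def by auto
    moreover from this have "K \<le> e_G (fst X) A B" using K by linarith
    ultimately show "X \<in> (\<Union>p \<in> ?pairs. ?heavy p)" using \<open>X \<in> ?bad\<close> by auto
  qed
  moreover have "finite (\<Union>p \<in> ?pairs. ?heavy p)"
    by (rule finite_subset[OF _ finite_col_graphs[OF assms(1)]]) auto
  ultimately have "card ?bad \<le> card (\<Union>p \<in> ?pairs. ?heavy p)"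
    by (rule card_mono[rotated])
  also have "\<dots> \<le> (\<Sum>p \<in> ?pairs. card (?heavy p))"
    by (rule card_UN_le[OF \<open>finite ?pairs\<close>])
  finally have "real (card ?bad) \<le> real (\<Sum>p \<in> ?pairs. card (?heavy p))"
    by (simp only: of_nat_le_iff)
  also have "\<dots> \<le> (\<Sum>p \<in> ?pairs. real (card ?C) * 2 ^ k0 / 2 ^ K)"
    unfolding of_nat_sum using card_e_G_ge_le[OF assms(1,2) _ _ _ _ k0] by (intro sum_mono) auto
  also have "\<dots> = real (card ?pairs) * (real (card ?C) * 2 ^ k0 / 2 ^ K)" by simp
  also have "\<dots> \<le> 4 ^ n * (real (card ?C) * 2 ^ k0 / 2 ^ K)"
    using card_pairs by (intro mult_right_mono) simp_all
  finally show ?thesis .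
qed

lemma prob_quasirandom_ge:
  assumes "even n" "finite D" "0 < card D" "2 * card D \<le> n"
    and k0: "2 \<le> k0" "6 * card D ^ 3 \<le> k0 * (n - 6 * card D)"
    and K: "real K \<le> 8 * (real (card D) - 1) ^ 3 / real n"
  shows "prob_quasirandom n D \<ge> 1 - 4 ^ n * 2 ^ k0 / 2 ^ K"
proof -
  let ?C = "col_graphs n D"
  let ?bad = "{X \<in> ?C. \<not> quasirandom n D (fst X)}"
  have fin: "finite ?C" by (rule finite_col_graphs[OF assms(2)])
  have "?C \<noteq> {}" by (rule col_graphs_nonempty[OF assms(1,2,4)])
  then have C_pos: "0 < real (card ?C)" using fin by (simp add: card_gt_0_iff)
  have "real (card ?bad) / real (card ?C) \<le> 4 ^ n * 2 ^ k0 / 2 ^ K"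
    using card_not_quasirandom_le[OF assms(2,3) k0 K] C_pos by (simp add: divide_le_eq field_simps)
  moreover have "{X \<in> ?C. quasirandom n D (fst X)} = ?C - ?bad" by auto
  then have "real (card {X \<in> ?C. quasirandom n D (fst X)}) = real (card ?C) - real (card ?bad)"
    using fin by (simp add: card_Diff_subset of_nat_diff card_mono)
  then have "prob_quasirandom n D = 1 - real (card ?bad) / real (card ?C)"
    unfolding prob_quasirandom_def using C_pos by (simp add: diff_divide_distrib)
  ultimately show ?thesis by simp
qed

lemma quasirandom_parameters:
  fixes \<mu> N :: real
  assumes \<mu>: "0 < \<mu>" "\<mu> < 1/1000" and N: "12 / \<mu> ^ 3 \<le> N" "1000 / \<mu> \<le> N"
  defines "d \<equiv> \<mu> * N + 1"
  shows "6 * d < N" "6 * d ^ 3 \<le> 25/4 * (\<mu> ^ 3 * N ^ 2) * (N - 6 * d)"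
    "8 * (d - 1) ^ 3 / N = 8 * (\<mu> ^ 3 * N ^ 2)" "8 * N + 8 \<le> \<mu> ^ 3 * N ^ 2"
proof -
  define t where "t = \<mu> * N"
  have "0 < N" using N(2) \<mu>(1) by (smt (verit) divide_pos_pos)
  have t: "1000 \<le> t" "1000 * t \<le> N"
    using N(2) \<mu> \<open>0 < N\<close> unfolding t_def by (simp_all add: field_simps)
  have d: "d = t + 1" unfolding d_def t_def ..
  have \<sigma>: "\<mu> ^ 3 * N ^ 2 = t ^ 3 / N"
    unfolding t_def using \<open>0 < N\<close> by (simp add: field_simps power3_eq_cube power2_eq_square)
  have "12 \<le> \<mu> ^ 3 * N" using N(1) \<mu>(1) by (simp add: field_simps)
  then have "12 * N \<le> \<mu> ^ 3 * N ^ 2"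
    using \<open>0 < N\<close> by (simp add: power2_eq_square mult.assoc[symmetric] mult_right_mono)
  then show "8 * N + 8 \<le> \<mu> ^ 3 * N ^ 2" using t by linarith
  show "6 * d < N" using t d by linarith
  show "8 * (d - 1) ^ 3 / N = 8 * (\<mu> ^ 3 * N ^ 2)" unfolding \<sigma> d by simp
  have "1000 * t ^ 2 \<le> t ^ 3" "1000 * t \<le> t ^ 2"
    using mult_right_mono[OF t(1), of "t ^ 2"] mult_right_mono[OF t(1), of t] t(1)
    by (simp_all add: power3_eq_cube power2_eq_square)
  moreover have "d ^ 3 = t ^ 3 + 3 * t ^ 2 + 3 * t + 1"
    unfolding d by (simp add: power3_eq_cube power2_eq_square algebra_simps)
  ultimately have "6 * d ^ 3 \<le> 25/4 * t ^ 3 * (993/1000)"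
    using t(1) by linarith
  also have "\<dots> = 25/4 * (t ^ 3 / N) * (993/1000 * N)" using \<open>0 < N\<close> by simp
  also have "\<dots> \<le> 25/4 * (t ^ 3 / N) * (N - 6 * d)"
    using t d \<open>0 < N\<close> by (intro mult_left_mono) auto
  finally show "6 * d ^ 3 \<le> 25/4 * (\<mu> ^ 3 * N ^ 2) * (N - 6 * d)" unfolding \<sigma> .
qed

lemma four_pow_two_pow_divide_le_exp:
  fixes \<sigma> :: real
  assumes "2 * real n + real k - real m \<le> -(3/2 * \<sigma>)" "0 \<le> \<sigma>"
  shows "(4::real) ^ n * 2 ^ k / 2 ^ m \<le> exp (- \<sigma>)"
proof -
  have pow2: "(2::real) ^ j = exp (real j * ln 2)" for j
    by (simp add: powr_def flip: powr_realpow)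
  have "(4::real) ^ n * 2 ^ k / 2 ^ m = 2 ^ (2 * n) * 2 ^ k / 2 ^ m" by (simp add: power_mult)
  also have "\<dots> = exp ((2 * real n + real k - real m) * ln 2)"
    unfolding pow2 by (simp add: exp_add[symmetric] exp_diff[symmetric] algebra_simps)
  also have "\<dots> \<le> exp (-(3/2 * \<sigma>) * (2/3))"
  proof -
    have "(2 * real n + real k - real m) * ln 2 \<le> -(3/2 * \<sigma>) * ln 2"
      using assms(1) by (intro mult_right_mono) auto
    also have "\<dots> \<le> -(3/2 * \<sigma>) * (2/3)"
      using ln2_ge_two_thirds assms(2) by (intro mult_left_mono_neg) auto
    finally show ?thesis by simp
  qed
  finally show ?thesis by simp
qed

lemma prob_quasirandom_ge_exp:
  fixes \<sigma> :: real
  assumes "even n" "finite D" "0 < card D" "6 * card D < n"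
    and "6 * real (card D) ^ 3 \<le> 25/4 * \<sigma> * (real n - 6 * real (card D))"
    and "8 * (real (card D) - 1) ^ 3 / real n = 8 * \<sigma>" and "8 * real n + 8 \<le> \<sigma>"
  shows "prob_quasirandom n D \<ge> 1 - exp (- \<sigma>)"
proof -
  define k0 where "k0 = nat \<lceil>25/4 * \<sigma>\<rceil>"
  define K where "K = nat \<lfloor>8 * \<sigma>\<rfloor>"
  have "0 \<le> \<sigma>" using assms(7) by linarith
  then have k0: "25/4 * \<sigma> \<le> real k0" "real k0 \<le> 25/4 * \<sigma> + 1"
    and K: "8 * \<sigma> - 1 \<le> real K" "real K \<le> 8 * \<sigma>"
    unfolding k0_def K_def by linarith+
  have "2 \<le> k0" using k0(1) assms(7) by linarith
  have "real (6 * card D ^ 3) \<le> 25/4 * \<sigma> * real (n - 6 * card D)"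
    using assms(4,5) by (simp add: of_nat_diff)
  also have "\<dots> \<le> real k0 * real (n - 6 * card D)"
    by (rule mult_right_mono[OF k0(1)]) simp
  also have "\<dots> = real (k0 * (n - 6 * card D))" by simp
  finally have "6 * card D ^ 3 \<le> k0 * (n - 6 * card D)" by (simp only: of_nat_le_iff)
  then have "prob_quasirandom n D \<ge> 1 - 4 ^ n * 2 ^ k0 / 2 ^ K"
    using assms(1-4) \<open>2 \<le> k0\<close> K(2) assms(6) by (intro prob_quasirandom_ge) auto
  moreover have "2 * real n + real k0 - real K \<le> -(3/2 * \<sigma>)" using k0(2) K(1) assms(7) by linarith
  then have "(4::real) ^ n * 2 ^ k0 / 2 ^ K \<le> exp (- \<sigma>)"
    using \<open>0 \<le> \<sigma>\<close> by (rule four_pow_two_pow_divide_le_exp)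
  ultimately show ?thesis by linarith
qed

theorem lemma7:
  shows "\<exists>c0::real. c0 > 0 \<and> (\<forall>\<mu>::real. 0 < \<mu> \<and> \<mu> < c0 \<longrightarrow>
     (\<exists>n0::nat. \<forall>n::nat. \<forall>D::nat set.
        even n \<and> n \<ge> n0 \<and> D \<subseteq> {1..n-1} \<and> real (card D) = \<mu> * real n + 1 \<longrightarrow>
        prob_quasirandom n D \<ge> 1 - exp (- (\<mu> ^ 3 * real n ^ 2))))"
proof (intro exI[of _ "1/1000"] conjI allI impI)
  fix \<mu> :: real assume \<mu>: "0 < \<mu> \<and> \<mu> < 1/1000"
  show "\<exists>n0::nat. \<forall>n::nat. \<forall>D::nat set.
        even n \<and> n \<ge> n0 \<and> D \<subseteq> {1..n-1} \<and> real (card D) = \<mu> * real n + 1 \<longrightarrow>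
        prob_quasirandom n D \<ge> 1 - exp (- (\<mu> ^ 3 * real n ^ 2))"
  proof (intro exI[of _ "nat \<lceil>12 / \<mu> ^ 3\<rceil> + nat \<lceil>1000 / \<mu>\<rceil>"] allI impI)
    fix n :: nat and D :: "nat set"
    assume H: "even n \<and> n \<ge> nat \<lceil>12 / \<mu> ^ 3\<rceil> + nat \<lceil>1000 / \<mu>\<rceil>
      \<and> D \<subseteq> {1..n-1} \<and> real (card D) = \<mu> * real n + 1"
    then have "12 / \<mu> ^ 3 \<le> real n" "1000 / \<mu> \<le> real n"
      using real_nat_ceiling_ge[of "12 / \<mu> ^ 3"] real_nat_ceiling_ge[of "1000 / \<mu>"] by linarith+
    note parameters = quasirandom_parameters[OF conjunct1[OF \<mu>] conjunct2[OF \<mu>] this]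
    have "finite D" using H finite_subset by blast
    moreover have "0 < real (card D)" using H \<mu> by (simp add: add_nonneg_pos)
    then have "0 < card D" by simp
    moreover have "real (6 * card D) < real n" using parameters(1) H by simp
    then have "6 * card D < n" by (simp only: of_nat_less_iff)
    ultimately show "prob_quasirandom n D \<ge> 1 - exp (- (\<mu> ^ 3 * real n ^ 2))"
      using H parameters(2-4) by (intro prob_quasirandom_ge_exp) auto
  qed
qed simp

end
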